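(* Let $H$ be a real Hilbert space, $C\subseteq H$ nonempty, closed and convex, and $F:H\to H$ an operator such that (A1) $S_D\neq\emptyset$; (A2) $F$ is quasimonotone; (A3) $F$ is uniformly continuous on $H$. Let $\{z_n\},\{w_n\}$ be the sequences generated by Algorithm 3.1 (with $\epsilon=0$), and assume $z_n\neq w_n$ for all $n$. Then: (i) for every $x^\ell\in S_D$, $\lim_{n\to\infty}\|z_n-x^\ell\|$ exists; (ii) $\lim_{n\to\infty}\|z_n-w_n\|=0$ and $\lim_{n\to\infty}\|z_{n+1}-z_n\|=0$.
   Context: $P_C$ denotes the metric projection onto $C$. $S$ is the solution set of the variational inequality: $x\in C$ with $\langle F(x),w-x\rangle\ge 0$ for all $w\in C$. $S_D$ is the set of $z\in C$ with $\langle F(v),v-z\rangle\ge0$ for all $v\in C$. $F$ is quasimonotone if $\langle F(w),z-w\rangle>0$ implies $\langle F(z),z-w\rangle\ge0$ for all $w,z\in H$. Algorithm 3.1 (with $\epsilon=0$): fix $\mu\in(0,1)$, a sequence $\{\xi_n\}\subset[0,\infty)$ with $\sum_{n}\xi_n<\infty$, $z_1\in H$ and $\lambda_1>0$. For $n=1,2,\dots$: $w_n=P_C(z_n-\lambda_nF(z_n))$; $z_{n+1}=w_n+\lambda_n(F(z_n)-F(w_n))$; $\lambda_{n+1}=\min\{\frac{\mu\|z_n-w_n\|}{\|F(z_n)-F(w_n)\|},\lambda_n+\xi_n\}$ if $F(z_n)\neq F(w_n)$, and $\lambda_{n+1}=\lambda_n+\xi_n$ otherwise. (If $z_n=w_n$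 the algorithm would stop; here it is assumed this never happens.) *)

theory Defs
  imports "HOL-Analysis.Analysis"
begin

text \<open>Metric projection onto C in a real inner product space (same definition as the
library's closest_point, which however is restricted to heine_borel spaces).\<close>
definition metric_proj :: "'a::real_inner set \<Rightarrow> 'a \<Rightarrow> 'a" where
  "metric_proj C x = (SOME p. p \<in> C \<and> (\<forall>y\<in>C. dist x p \<le> dist x y))"

definition VI_sol :: "'a::real_inner set \<Rightarrow> ('a \<Rightarrow> 'a) \<Rightarrow> 'a set" where
  "VI_sol C F = {x \<in> C. \<forall>w\<in>C. inner (F x) (w - x) \<ge> 0}"

definition dual_sol :: "'a::real_inner set \<Rightarrow> ('a \<Rightarrow> 'a) \<Rightarrow> 'a set" where
  "dual_sol C F = {z \<in> C. \<forall>v\<in>C. inner (F v) (v - z) \<ge> 0}"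

definition quasimonotone :: "('a::real_inner \<Rightarrow> 'a) \<Rightarrow> bool" where
  "quasimonotone F \<longleftrightarrow> (\<forall>w z. inner (F w) (z - w) > 0 \<longrightarrow> inner (F z) (z - w) \<ge> 0)"

end

theory Submission
  imports Defs
begin

(*
  For p \<in> S_D, the projection inequality defining w_n together with
  \<langle>F w_n, w_n - p\<rangle> \<ge> 0 (p is a dual solution and w_n \<in> C) gives
  \<parallel>z_{n+1} - p\<parallel>^2 \<le> \<parallel>z_n - p\<parallel>^2 - \<parallel>z_n - w_n\<parallel>^2 + (\<lambda>_n \<parallel>F z_n - F w_n\<parallel>)^2.
  The step-size rule only controls \<lambda>_{n+1} \<parallel>F z_n - F w_n\<parallel> \<le> \<mu> \<parallel>z_n - w_n\<parallel>, and
  \<lambda>_n may tend to 0, so \<lambda>_n is compared with \<lambda>_{n+1} through the drops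
  max 0 (\<lambda>_n - \<lambda>_{n+1}); these are summable because \<lambda>_n increases by at most \<xi>_n.
  Uniform continuity bounds \<parallel>F x - F y\<parallel> by an affine function of \<parallel>x - y\<parallel>, so eventually
  \<lambda>_n \<parallel>F z_n - F w_n\<parallel> \<le> (1 + \<mu>)/2 \<parallel>z_n - w_n\<parallel> + A drop_n, and the estimate becomes a
  quasi-Fejer inequality with summable error. Hence \<parallel>z_n - p\<parallel> converges and
  \<Sum> \<parallel>z_n - w_n\<parallel>^2 < \<infinity>; the same bound controls
  \<parallel>z_{n+1} - z_n\<parallel> \<le> \<parallel>z_n - w_n\<parallel> + \<lambda>_n \<parallel>F z_n - F w_n\<parallel>.
*)

lemma norm_add_sq_plus_norm_diff_sq:
  fixes a b :: "'a::real_inner"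
  shows "(norm (a + b))^2 + (norm (a - b))^2 = 2 * (norm a)^2 + 2 * (norm b)\<^sup>2"
  unfolding power2_norm_eq_inner
  by (simp add: inner_add_left inner_add_right inner_diff_left inner_diff_right inner_commute)

lemma dist_sq_le_infdist_convex:
  fixes C :: "'a::real_inner set"
  assumes "convex C" "y \<in> C" "y' \<in> C"
  shows "(dist y y')^2 \<le> 2 * (dist x y)^2 + 2 * (dist x y')^2 - 4 * (infdist x C)\<^sup>2"
proof -
  have "(1/2) *\<^sub>R y + (1/2) *\<^sub>R y' \<in> C"
    using assms by (intro convexD) auto
  then have "infdist x C \<le> norm (x - ((1/2) *\<^sub>R y + (1/2) *\<^sub>R y'))"
    by (metis infdist_le dist_norm)
  then have "4 * (infdist x C)^2 \<le> (norm (2 *\<^sub>R (x - ((1/2) *\<^sub>R y + (1/2) *\<^sub>R y'))))\<^sup>2"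
    by (simp add: power_mult_distrib power_mono infdist_nonneg)
  also have "2 *\<^sub>R (x - ((1/2) *\<^sub>R y + (1/2) *\<^sub>R y')) = (x - y) + (x - y')"
    by (simp add: algebra_simps scaleR_2)
  finally show ?thesis
    using norm_add_sq_plus_norm_diff_sq[of "x - y" "x - y'"]
    by (simp add: dist_norm norm_minus_commute)
qed

lemma nearest_point_exists:
  fixes C :: "'a::{real_inner, complete_space} set"
  assumes "C \<noteq> {}" "closed C" "convex C"
  shows "\<exists>p\<in>C. \<forall>y\<in>C. dist x p \<le> dist x y"
proof -
  define d where "d = infdist x C"
  define e where "e = (\<lambda>n. d + 1 / real (Suc n))"
  have "\<exists>y\<in>C. dist x y < e n" for n
    using cInf_lessD[of "(\<lambda>y. dist x y) ` C" "e n"] assms(1)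
    by (auto simp: e_def d_def infdist_notempty)
  then obtain y where yC: "\<And>n. y n \<in> C" and y_near: "\<And>n. dist x (y n) < e n"
    by metis
  have e_lim: "e \<longlonglongrightarrow> d"
    unfolding e_def using tendsto_add[OF tendsto_const[of d] LIMSEQ_Suc[OF lim_inverse_n']]
    by simp
  have "Cauchy y"
  proof (rule metric_CauchyI)
    fix \<epsilon> :: real
    assume "\<epsilon> > 0"
    have "(\<lambda>n. (e n)^2 - d\<^sup>2) \<longlonglongrightarrow> 0"
      using tendsto_diff[OF tendsto_power[OF e_lim, of 2] tendsto_const[of "d\<^sup>2"]] by simp
    then have "\<forall>\<^sub>F n in sequentially. (e n)^2 - d^2 < \<epsilon>^2 / 4"
      using \<open>\<epsilon> > 0\<close> by (intro order_tendstoD(2)) auto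
    then obtain M where M: "\<And>n. n \<ge> M \<Longrightarrow> (e n)^2 - d^2 < \<epsilon>^2 / 4"
      by (auto simp: eventually_sequentially)
    have "dist (y m) (y n) < \<epsilon>" if "m \<ge> M" "n \<ge> M" for m n
    proof -
      have sq: "(dist x (y k))^2 \<le> (e k)\<^sup>2" for k
        using y_near[of k] by (intro power_mono) auto
      have "(dist (y m) (y n))^2 < \<epsilon>\<^sup>2"
        using dist_sq_le_infdist_convex[OF assms(3) yC[of m] yC[of n], of x] sq[of m] sq[of n]
          M[OF that(1)] M[OF that(2)] unfolding d_def by linarith
      then show ?thesis
        using \<open>\<epsilon> > 0\<close> by (simp add: power_less_imp_less_base)
    qed
    then show "\<exists>M. \<forall>m\<ge>M. \<forall>n\<ge>M. dist (y m) (y n) < \<epsilon>" by blast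
  qed
  then obtain p where p: "y \<longlonglongrightarrow> p"
    using Cauchy_convergent_iff convergent_def by blast
  have "p \<in> C"
    using closed_sequentially[OF assms(2)] yC p by blast
  have "(\<lambda>n. dist x (y n)) \<longlonglongrightarrow> d"
    by (rule real_tendsto_sandwich[OF _ _ tendsto_const e_lim])
      (use yC y_near in \<open>auto simp: d_def infdist_le less_imp_le\<close>)
  then have "dist x p = d"
    using LIMSEQ_unique tendsto_dist[OF tendsto_const p] by blast
  then show ?thesis
    using \<open>p \<in> C\<close> infdist_le unfolding d_def by metis
qed

context
  fixes C :: "'a::{real_inner, complete_space} set"
  assumes C: "C \<noteq> {}" "closed C" "convex C"
begin

lemma metric_proj_in: "metric_proj C x \<in> C"
  and metric_proj_le: "y \<in> C \<Longrightarrow> dist x (metric_proj C x) \<le> dist x y"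
  using someI_ex[OF nearest_point_exists[OF C, of x, unfolded Bex_def]]
  unfolding metric_proj_def by auto

lemma metric_proj_inner_le: "y \<in> C \<Longrightarrow> inner (x - metric_proj C x) (y - metric_proj C x) \<le> 0"
  using any_closest_point_dot[OF C(3,2) metric_proj_in] metric_proj_le by blast

end

lemma dist_le_of_nat_if_local_bound:
  fixes F :: "'a::real_normed_vector \<Rightarrow> 'b::metric_space"
  assumes step: "\<And>x y. norm (x - y) \<le> r \<Longrightarrow> dist (F x) (F y) \<le> 1"
  shows "norm (x - y) \<le> real k * r \<Longrightarrow> dist (F x) (F y) \<le> real k"
proof (induction k arbitrary: y)
  case 0
  then show ?case by simp
next
  case (Suc k)
  define t where "t = real k / real (Suc k)"
  define y' where "y' = x + t *\<^sub>R (y - x)"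
  have "norm (x - y') = t * norm (x - y)"
    by (simp add: y'_def t_def norm_minus_commute)
  also have "\<dots> \<le> t * (real (Suc k) * r)"
    using Suc.prems by (intro mult_left_mono) (auto simp: t_def)
  also have "\<dots> = real k * r"
    by (simp add: t_def)
  finally have near_x: "dist (F x) (F y') \<le> real k"
    by (rule Suc.IH)
  have "y' - y = (1 - t) *\<^sub>R (x - y)"
    by (simp add: y'_def algebra_simps)
  moreover have "1 - t = 1 / real (Suc k)"
    by (simp add: t_def field_simps)
  ultimately have "norm (y' - y) = norm (x - y) / real (Suc k)"
    by simp
  also have "\<dots> \<le> r"
    using Suc.prems by (simp add: pos_divide_le_eq mult.commute)
  finally have "dist (F y') (F y) \<le> 1"
    by (rule step)
  with near_x show ?case
    using dist_triangle[of "F x" "F y" "F y'"] by simp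
qed

lemma uniformly_continuous_on_UNIV_affine_bound:
  fixes F :: "'a::real_normed_vector \<Rightarrow> 'b::metric_space"
  assumes "uniformly_continuous_on UNIV F"
  obtains A B where "\<And>x y. dist (F x) (F y) \<le> A + B * norm (x - y)"
proof -
  obtain r where "r > 0" and r: "\<And>x y. dist x y < r \<Longrightarrow> dist (F x) (F y) < 1"
    using assms unfolding uniformly_continuous_on_def by (meson UNIV_I zero_less_one)
  have step: "dist (F x) (F y) \<le> 1" if "norm (x - y) \<le> r / 2" for x y
    using r[of x y] that \<open>r > 0\<close> by (simp add: dist_norm)
  have "dist (F x) (F y) \<le> 1 + 2 / r * norm (x - y)" for x y
  proof -
    define q where "q = norm (x - y) / (r / 2)"
    define k where "k = nat \<lceil>q\<rceil>"
    have "real k = of_int \<lceil>q\<rceil>"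
      using \<open>r > 0\<close> by (simp add: k_def q_def)
    then have "q \<le> real k" "real k \<le> q + 1"
      by linarith+
    then have "norm (x - y) \<le> real k * (r / 2)"
      using \<open>r > 0\<close> by (simp add: q_def pos_divide_le_eq)
    then have "dist (F x) (F y) \<le> real k"
      using dist_le_of_nat_if_local_bound[of "r / 2" F] step by blast
    also have "\<dots> \<le> 1 + 2 / r * norm (x - y)"
      using \<open>real k \<le> q + 1\<close> by (simp add: q_def field_simps)
    finally show ?thesis .
  qed
  then show thesis by (rule that)
qed

lemma norm_sq_tseng_step_le:
  fixes u v p a b :: "'a::real_inner"
  assumes proj: "inner ((u - l *\<^sub>R a) - v) (p - v) \<le> 0"
    and dual: "inner b (v - p) \<ge> 0" and "l \<ge> 0"
  shows "(norm (v + l *\<^sub>R (a - b) - p))\<^sup>2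
    \<le> (norm (u - p))^2 - (norm (u - v))^2 + (l * norm (a - b))\<^sup>2"
proof -
  have "(norm (v + l *\<^sub>R (a - b) - p))\<^sup>2
      = (norm (v - p))^2 + 2 * l * inner (v - p) (a - b) + (l * norm (a - b))\<^sup>2"
    unfolding power_mult_distrib power2_norm_eq_inner
    by (simp add: inner_add_left inner_add_right inner_diff_left inner_diff_right
        inner_commute power2_eq_square algebra_simps)
  moreover have "(norm (u - p))^2 - (norm (u - v))^2 = (norm (v - p))^2 + 2 * inner (u - v) (v - p)"
    unfolding power2_norm_eq_inner
    by (simp add: inner_diff_left inner_diff_right inner_commute algebra_simps)
  moreover have "inner (u - v) (v - p) \<ge> l * inner a (v - p)"
    using proj by (simp add: inner_diff_left inner_diff_right inner_commute algebra_simps)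
  moreover have "l * inner b (v - p) \<ge> 0"
    using dual \<open>l \<ge> 0\<close> by simp
  ultimately show ?thesis
    by (simp add: inner_diff_left inner_diff_right inner_commute algebra_simps)
qed

lemma quasi_fejer_sequence:
  fixes a c e :: "nat \<Rightarrow> real"
  assumes a_nonneg: "\<And>n. n \<ge> N \<Longrightarrow> 0 \<le> a n"
    and a_Suc: "\<And>n. n \<ge> N \<Longrightarrow> a (Suc n) \<le> a n - c n + e n"
    and c_nonneg: "\<And>n. 0 \<le> c n" and e_nonneg: "\<And>n. 0 \<le> e n" and "summable e"
  shows "convergent a" and "summable c"
proof -
  define t where "t n = suminf e - (\<Sum>k<n. e k)" for n
  have t_nonneg: "0 \<le> t n" for n
    using sum_le_suminf[OF \<open>summable e\<close>, of "{..<n}"] e_nonneg by (simp add: t_def)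
  have t_lim: "t \<longlonglongrightarrow> 0"
    using tendsto_diff[OF tendsto_const[of "suminf e"] summable_LIMSEQ[OF \<open>summable e\<close>]]
    by (simp add: t_def[abs_def])
  define b where "b n = a n + t n" for n
  have b_Suc: "b (Suc n) \<le> b n - c n" if "n \<ge> N" for n
    using a_Suc[OF that] by (simp add: b_def t_def)
  have "decseq (\<lambda>k. b (k + N))"
  proof (rule decseq_SucI)
    fix k
    show "b (Suc k + N) \<le> b (k + N)"
      using b_Suc[of "k + N"] c_nonneg[of "k + N"] by simp
  qed
  moreover have "\<forall>k. 0 \<le> b (k + N)"
    using a_nonneg t_nonneg by (simp add: b_def)
  ultimately obtain L where "(\<lambda>k. b (k + N)) \<longlonglongrightarrow> L"
    by (rule decseq_convergent)
  then have b_lim: "b \<longlonglongrightarrow> L"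
    by (rule LIMSEQ_offset)
  have "(\<lambda>n. b n - t n) \<longlonglongrightarrow> L - 0"
    by (intro tendsto_diff b_lim t_lim)
  then show "convergent a"
    by (simp add: b_def convergentI)
  show "summable c"
    using summable_comparison_test'[OF telescope_summable'[OF b_lim], of N c] b_Suc c_nonneg
    by fastforce
qed

lemma power2_convex_split_le:
  fixes x y \<nu> :: real
  assumes "0 < \<nu>" "\<nu> < 1"
  shows "(\<nu> * x + y)^2 \<le> \<nu> * x^2 + y^2 / (1 - \<nu>)"
proof -
  have "(1 - \<nu>) * (\<nu> * x^2 + y^2 / (1 - \<nu>)) - (1 - \<nu>) * (\<nu> * x + y)\<^sup>2
      = \<nu> * ((1 - \<nu>) * x - y)\<^sup>2"
    using assms by (simp add: field_simps power2_eq_square)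
  also have "\<dots> \<ge> 0"
    using assms by simp
  finally show ?thesis
    using assms by simp
qed

locale adaptive_tseng =
  fixes C :: "'a::{real_inner, complete_space} set"
    and F :: "'a \<Rightarrow> 'a"
    and z w :: "nat \<Rightarrow> 'a"
    and lam \<xi> :: "nat \<Rightarrow> real"
    and \<mu> :: real
  assumes C_nonempty: "C \<noteq> {}" and C_closed: "closed C" and C_convex: "convex C"
    and F_ucont: "uniformly_continuous_on UNIV F"
    and mu_pos: "0 < \<mu>" and mu_less_1: "\<mu> < 1"
    and xi_nonneg: "\<And>n. \<xi> n \<ge> 0" and xi_summable: "summable \<xi>"
    and lam_1_pos: "lam 1 > 0"
    and w_eq: "\<And>n. n \<ge> 1 \<Longrightarrow> w n = metric_proj C (z n - lam n *\<^sub>R F (z n))"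
    and z_Suc_eq: "\<And>n. n \<ge> 1 \<Longrightarrow> z (Suc n) = w n + lam n *\<^sub>R (F (z n) - F (w n))"
    and lam_Suc_eq: "\<And>n. n \<ge> 1 \<Longrightarrow> lam (Suc n) =
        (if F (z n) \<noteq> F (w n)
         then min (\<mu> * norm (z n - w n) / norm (F (z n) - F (w n))) (lam n + \<xi> n)
         else lam n + \<xi> n)"
    and z_neq_w: "\<And>n. n \<ge> 1 \<Longrightarrow> z n \<noteq> w n"
begin

abbreviation residual :: "nat \<Rightarrow> real" where
  "residual n \<equiv> norm (z n - w n)"

abbreviation gap :: "nat \<Rightarrow> real" where
  "gap n \<equiv> norm (F (z n) - F (w n))"

abbreviation lam_drop :: "nat \<Rightarrow> real" where
  "lam_drop n \<equiv> max 0 (lam n - lam (Suc n))"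

lemma w_in_C: "n \<ge> 1 \<Longrightarrow> w n \<in> C"
  using metric_proj_in[OF C_nonempty C_closed C_convex] w_eq by simp

lemma w_inner_le:
  "n \<ge> 1 \<Longrightarrow> y \<in> C \<Longrightarrow> inner ((z n - lam n *\<^sub>R F (z n)) - w n) (y - w n) \<le> 0"
  using metric_proj_inner_le[OF C_nonempty C_closed C_convex] w_eq by simp

lemma lam_pos: "n \<ge> 1 \<Longrightarrow> 0 < lam n"
proof (induction n rule: nat_induct_at_least)
  case base
  show ?case by (rule lam_1_pos)
next
  case (Suc n)
  have "0 < lam n + \<xi> n"
    using Suc.IH xi_nonneg[of n] by simp
  moreover have "0 < \<mu> * residual n / gap n" if "F (z n) \<noteq> F (w n)"
    using that mu_pos z_neq_w[OF Suc.hyps] by simp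
  ultimately show ?case
    using lam_Suc_eq[OF Suc.hyps] by auto
qed

lemma lam_Suc_le: "n \<ge> 1 \<Longrightarrow> lam (Suc n) \<le> lam n - lam_drop n + \<xi> n"
  using lam_Suc_eq[of n] xi_nonneg[of n] by (auto split: if_splits)

lemma summable_lam_drop: "summable lam_drop"
  using quasi_fejer_sequence(2)[of 1 lam lam_drop \<xi>] lam_pos lam_Suc_le xi_nonneg xi_summable
  by (simp add: less_imp_le)

lemma lam_Suc_gap_le:
  assumes "n \<ge> 1"
  shows "lam (Suc n) * gap n \<le> \<mu> * residual n"
proof (cases "F (z n) = F (w n)")
  case True
  then show ?thesis
    using mu_pos by simp
next
  case False
  then have "lam (Suc n) \<le> \<mu> * residual n / gap n"
    using lam_Suc_eq[OF assms] by simp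
  then show ?thesis
    using False by (simp add: pos_le_divide_eq)
qed

lemma eventually_lam_gap_le:
  obtains A where "\<forall>\<^sub>F n in sequentially.
    lam n * gap n \<le> (1 + \<mu>) / 2 * residual n + A * lam_drop n"
proof -
  obtain A B where affine: "\<And>x y. norm (F x - F y) \<le> A + B * norm (x - y)"
    using uniformly_continuous_on_UNIV_affine_bound[OF F_ucont] by (metis dist_norm)
  have "(\<lambda>n. B * lam_drop n) \<longlonglongrightarrow> B * 0"
    by (intro tendsto_mult tendsto_const summable_LIMSEQ_zero summable_lam_drop)
  then have "\<forall>\<^sub>F n in sequentially. B * lam_drop n < (1 - \<mu>) / 2"
    using mu_less_1 by (intro order_tendstoD(2)) auto
  moreover have "\<forall>\<^sub>F n in sequentially. n \<ge> 1"
    by (rule eventually_ge_at_top)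
  ultimately have "\<forall>\<^sub>F n in sequentially.
      lam n * gap n \<le> (1 + \<mu>) / 2 * residual n + A * lam_drop n"
  proof eventually_elim
    case (elim n)
    have "lam n * gap n \<le> lam (Suc n) * gap n + lam_drop n * gap n"
      using mult_right_mono[of "lam n" "lam (Suc n) + lam_drop n" "gap n"]
      by (simp add: distrib_right)
    also have "\<dots> \<le> \<mu> * residual n + lam_drop n * (A + B * residual n)"
      using lam_Suc_gap_le[OF elim(2)] affine[of "z n" "w n"]
      by (intro add_mono mult_left_mono) auto
    also have "\<dots> \<le> \<mu> * residual n + A * lam_drop n + (1 - \<mu>) / 2 * residual n"
      using mult_right_mono[OF less_imp_le[OF elim(1)], of "residual n"]
      by (simp add: algebra_simps)
    finally show ?case
      by (simp add: field_simps)
  qed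
  then show thesis
    by (rule that)
qed

lemma eventually_lam_gap_sq_le:
  obtains K where "K \<ge> 0" and "\<forall>\<^sub>F n in sequentially.
    (lam n * gap n)^2 \<le> (1 + \<mu>) / 2 * (residual n)^2 + K * lam_drop n"
proof -
  define \<nu> where "\<nu> = (1 + \<mu>) / 2"
  have \<nu>: "0 < \<nu>" "\<nu> < 1"
    using mu_pos mu_less_1 by (auto simp: \<nu>_def)
  obtain A where "\<forall>\<^sub>F n in sequentially. lam n * gap n \<le> \<nu> * residual n + A * lam_drop n"
    unfolding \<nu>_def by (rule eventually_lam_gap_le)
  moreover have "\<forall>\<^sub>F n in sequentially. lam_drop n < 1"
    using order_tendstoD(2)[OF summable_LIMSEQ_zero[OF summable_lam_drop], of 1] by simp
  moreover have "\<forall>\<^sub>F n in sequentially. n \<ge> 1"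
    by (rule eventually_ge_at_top)
  ultimately have "\<forall>\<^sub>F n in sequentially.
      (lam n * gap n)^2 \<le> \<nu> * (residual n)^2 + A^2 / (1 - \<nu>) * lam_drop n"
  proof eventually_elim
    case (elim n)
    have "(A * lam_drop n)^2 = A^2 * (lam_drop n * lam_drop n)"
      by (simp add: power2_eq_square)
    also have "\<dots> \<le> A^2 * lam_drop n"
      using elim(2) by (intro mult_left_mono mult_left_le) auto
    finally have drop_sq: "(A * lam_drop n)^2 \<le> A^2 * lam_drop n" .
    have "(lam n * gap n)^2 \<le> (\<nu> * residual n + A * lam_drop n)\<^sup>2"
      using elim(1) lam_pos[OF elim(3)] by (intro power_mono) auto
    also have "\<dots> \<le> \<nu> * (residual n)^2 + (A * lam_drop n)^2 / (1 - \<nu>)"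
      by (rule power2_convex_split_le[OF \<nu>])
    also have "\<dots> \<le> \<nu> * (residual n)^2 + A^2 / (1 - \<nu>) * lam_drop n"
      using drop_sq \<nu> by (simp add: divide_right_mono)
    finally show ?case .
  qed
  then show thesis
    using that[of "A^2 / (1 - \<nu>)"] \<nu> unfolding \<nu>_def by simp
qed

lemma norm_sq_z_Suc_le:
  assumes "p \<in> dual_sol C F" "n \<ge> 1"
  shows "(norm (z (Suc n) - p))^2 \<le> (norm (z n - p))^2 - (residual n)^2 + (lam n * gap n)\<^sup>2"
proof -
  have "p \<in> C" and "inner (F (w n)) (w n - p) \<ge> 0"
    using assms w_in_C unfolding dual_sol_def by auto
  then show ?thesis
    unfolding z_Suc_eq[OF assms(2)]
    using norm_sq_tseng_step_le w_inner_le[OF assms(2)] lam_pos[OF assms(2)]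
    by (meson less_imp_le)
qed

lemma quasi_fejer_dual_sol:
  assumes "p \<in> dual_sol C F"
  shows "convergent (\<lambda>n. (norm (z n - p))\<^sup>2)" and "summable (\<lambda>n. (residual n)\<^sup>2)"
proof -
  obtain K where "K \<ge> 0" and "\<forall>\<^sub>F n in sequentially.
      (lam n * gap n)^2 \<le> (1 + \<mu>) / 2 * (residual n)^2 + K * lam_drop n"
    by (rule eventually_lam_gap_sq_le)
  then obtain N where N: "\<And>n. n \<ge> N \<Longrightarrow>
      (lam n * gap n)^2 \<le> (1 + \<mu>) / 2 * (residual n)^2 + K * lam_drop n"
    by (auto simp: eventually_sequentially)
  have "(norm (z (Suc n) - p))\<^sup>2
      \<le> (norm (z n - p))^2 - (1 - \<mu>) / 2 * (residual n)^2 + K * lam_drop n"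
    if "n \<ge> max N 1" for n
    using norm_sq_z_Suc_le[OF assms, of n] N[of n] that by (simp add: field_simps)
  moreover have "summable (\<lambda>n. K * lam_drop n)"
    by (intro summable_mult summable_lam_drop)
  ultimately have "convergent (\<lambda>n. (norm (z n - p))\<^sup>2)
      \<and> summable (\<lambda>n. (1 - \<mu>) / 2 * (residual n)\<^sup>2)"
    using quasi_fejer_sequence[of "max N 1" "\<lambda>n. (norm (z n - p))\<^sup>2"
        "\<lambda>n. (1 - \<mu>) / 2 * (residual n)\<^sup>2" "\<lambda>n. K * lam_drop n"] mu_less_1 \<open>K \<ge> 0\<close>
    by simp
  then show "convergent (\<lambda>n. (norm (z n - p))\<^sup>2)" "summable (\<lambda>n. (residual n)\<^sup>2)"
    using mu_less_1 by auto
qed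

lemma convergent_dist_dual_sol:
  assumes "p \<in> dual_sol C F"
  shows "convergent (\<lambda>n. norm (z n - p))"
proof -
  obtain L where "(\<lambda>n. (norm (z n - p))\<^sup>2) \<longlonglongrightarrow> L"
    using quasi_fejer_dual_sol(1)[OF assms] by (auto simp: convergent_def)
  then have "(\<lambda>n. sqrt ((norm (z n - p))\<^sup>2)) \<longlonglongrightarrow> sqrt L"
    by (rule tendsto_real_sqrt)
  then show ?thesis
    by (auto intro: convergentI)
qed

lemma residual_tendsto_zero:
  assumes "dual_sol C F \<noteq> {}"
  shows "residual \<longlonglongrightarrow> 0"
proof -
  obtain p where "p \<in> dual_sol C F"
    using assms by blast
  then have "(\<lambda>n. (residual n)\<^sup>2) \<longlonglongrightarrow> 0"
    by (intro summable_LIMSEQ_zero quasi_fejer_dual_sol(2))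
  then have "(\<lambda>n. sqrt ((residual n)\<^sup>2)) \<longlonglongrightarrow> sqrt 0"
    by (rule tendsto_real_sqrt)
  then show ?thesis
    by simp
qed

lemma z_Suc_diff_tendsto_zero:
  assumes "dual_sol C F \<noteq> {}"
  shows "(\<lambda>n. norm (z (Suc n) - z n)) \<longlonglongrightarrow> 0"
proof -
  define c where "c = 1 + (1 + \<mu>) / 2"
  obtain A where "\<forall>\<^sub>F n in sequentially.
      lam n * gap n \<le> (1 + \<mu>) / 2 * residual n + A * lam_drop n"
    by (rule eventually_lam_gap_le)
  moreover have "\<forall>\<^sub>F n in sequentially. n \<ge> 1"
    by (rule eventually_ge_at_top)
  ultimately have "\<forall>\<^sub>F n in sequentially.
      norm (norm (z (Suc n) - z n)) \<le> c * residual n + A * lam_drop n"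
  proof eventually_elim
    case (elim n)
    have "z (Suc n) - z n = (w n - z n) + lam n *\<^sub>R (F (z n) - F (w n))"
      using z_Suc_eq[OF elim(2)] by simp
    then have "norm (z (Suc n) - z n) \<le> norm (w n - z n) + norm (lam n *\<^sub>R (F (z n) - F (w n)))"
      by (metis norm_triangle_ineq)
    also have "\<dots> = residual n + lam n * gap n"
      using lam_pos[OF elim(2)] by (simp add: norm_minus_commute)
    finally show ?case
      using elim(1) by (simp add: c_def algebra_simps)
  qed
  moreover have "(\<lambda>n. c * residual n + A * lam_drop n) \<longlonglongrightarrow> c * 0 + A * 0"
    using residual_tendsto_zero[OF assms] summable_LIMSEQ_zero[OF summable_lam_drop]
    by (intro tendsto_add tendsto_mult_left)
  ultimately show ?thesis
    using Lim_null_comparison by fastforce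
qed

end

theorem lemma4p2:
  fixes C :: "'a::{real_inner, complete_space} set"
    and F :: "'a \<Rightarrow> 'a"
    and z w :: "nat \<Rightarrow> 'a"
    and lam \<xi> :: "nat \<Rightarrow> real"
    and \<mu> :: real
  assumes C: "C \<noteq> {}" "closed C" "convex C"
    and A1: "dual_sol C F \<noteq> {}"
    and A2: "quasimonotone F"
    and A3: "uniformly_continuous_on UNIV F"
    and mu: "0 < \<mu>" "\<mu> < 1"
    and xi: "\<And>n. \<xi> n \<ge> 0" "summable \<xi>"
    and lam1: "lam 1 > 0"
    and w_def: "\<And>n. n \<ge> 1 \<Longrightarrow> w n = metric_proj C (z n - lam n *\<^sub>R F (z n))"
    and z_def: "\<And>n. n \<ge> 1 \<Longrightarrow> z (Suc n) = w n + lam n *\<^sub>R (F (z n) - F (w n))"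
    and lam_def: "\<And>n. n \<ge> 1 \<Longrightarrow> lam (Suc n) =
        (if F (z n) \<noteq> F (w n)
         then min (\<mu> * norm (z n - w n) / norm (F (z n) - F (w n))) (lam n + \<xi> n)
         else lam n + \<xi> n)"
    and nostop: "\<And>n. n \<ge> 1 \<Longrightarrow> z n \<noteq> w n"
  shows "(\<forall>x \<in> dual_sol C F. convergent (\<lambda>n. norm (z n - x)))
    \<and> (\<lambda>n. norm (z n - w n)) \<longlonglongrightarrow> 0
    \<and> (\<lambda>n. norm (z (Suc n) - z n)) \<longlonglongrightarrow> 0"
proof -
  interpret adaptive_tseng C F z w lam \<xi> \<mu>
    using C A3 mu xi lam1 w_def z_def lam_def nostop by unfold_locales
  show ?thesis
    using convergent_dist_dual_sol residual_tendsto_zero[OF A1] z_Suc_diff_tendsto_zero[OF A1]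
    by blast
qed

end
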